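(* Let $G$ be a finite simple graph with $n>2$ vertices. Then $\mathrm{mur}(G)=1$ if and only if $G$ or $\overline{G}$ is isomorphic to either $K_r\cup K_s$ for positive integers $r,s$ with $r+s=n$ (so $r+s>2$), or $K_r\cup\overline{K_s}$ for integers $r,s$ with $r+s=n$ and $1<r<n$.
   Context: For a finite simple undirected graph $G$ on vertices $v_1,\dots,v_n$, let $A_G$ be its $(0,1)$-adjacency matrix, $D_G=\mathrm{diag}(d_1,\dots,d_n)$ with $d_i$ the degree of $v_i$, $I$ the $n\times n$ identity matrix and $J$ the $n\times n$ all-ones matrix. A universal adjacency matrix of $G$ is any matrix $\alpha A_G+\beta I+\gamma J+\delta D_G$ with real scalars $\alpha,\beta,\gamma,\delta$ and $\alpha\neq 0$. The minimum universal rank $\mathrm{mur}(G)$ is the minimum rank over all universal adjacency matrices of $G$. $\overline{G}$ denotes the complement of $G$; $K_r\cup K_s$ and $K_r\cup\overline{K_s}$ denote vertex-disjoint unions, where $\overline{K_s}$ is the edgeless graph on $s$ vertices. *)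

theory Defs
  imports "HOL-Analysis.Analysis"
begin

definition simple_graph :: "('n::finite \<Rightarrow> 'n \<Rightarrow> bool) \<Rightarrow> bool" where
  "simple_graph E \<longleftrightarrow> (\<forall>x y. E x y \<longrightarrow> E y x) \<and> (\<forall>x. \<not> E x x)"

definition graph_compl :: "('n \<Rightarrow> 'n \<Rightarrow> bool) \<Rightarrow> 'n \<Rightarrow> 'n \<Rightarrow> bool" where
  "graph_compl E x y \<longleftrightarrow> x \<noteq> y \<and> \<not> E x y"

definition degree :: "('n::finite \<Rightarrow> 'n \<Rightarrow> bool) \<Rightarrow> 'n \<Rightarrow> nat" where
  "degree E v = card {w. E v w}"

definition adj_matrix :: "('n::finite \<Rightarrow> 'n \<Rightarrow> bool) \<Rightarrow> real^'n^'n" where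
  "adj_matrix E = (\<chi> i j. if E i j then 1 else 0)"

definition deg_matrix :: "('n::finite \<Rightarrow> 'n \<Rightarrow> bool) \<Rightarrow> real^'n^'n" where
  "deg_matrix E = (\<chi> i j. if i = j then real (degree E i) else 0)"

definition ones_matrix :: "real^'n^'n" where
  "ones_matrix = (\<chi> i j. 1)"

definition universal_adj :: "('n::finite \<Rightarrow> 'n \<Rightarrow> bool) \<Rightarrow> real \<Rightarrow> real \<Rightarrow> real \<Rightarrow> real \<Rightarrow> real^'n^'n" where
  "universal_adj E \<alpha> \<beta> \<gamma> \<delta> =
     \<alpha> *\<^sub>R adj_matrix E + \<beta> *\<^sub>R mat 1 + \<gamma> *\<^sub>R ones_matrix + \<delta> *\<^sub>R deg_matrix E"

definition mur :: "('n::finite \<Rightarrow> 'n \<Rightarrow> bool) \<Rightarrow> nat" where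
  "mur E = (LEAST k. \<exists>\<alpha> \<beta> \<gamma> \<delta>. \<alpha> \<noteq> 0 \<and> rank (universal_adj E \<alpha> \<beta> \<gamma> \<delta>) = k)"

definition iso_to :: "('n::finite \<Rightarrow> 'n \<Rightarrow> bool) \<Rightarrow> (nat \<Rightarrow> nat \<Rightarrow> bool) \<Rightarrow> nat \<Rightarrow> bool" where
  "iso_to E H m \<longleftrightarrow> (\<exists>f. bij_betw f (UNIV :: 'n set) {0..<m} \<and> (\<forall>x y. E x y \<longleftrightarrow> H (f x) (f y)))"

text \<open>K_r \<union> K_s on vertices {0..<r+s}: first r vertices form one clique, the rest the other.\<close>
definition K_union_K :: "nat \<Rightarrow> nat \<Rightarrow> nat \<Rightarrow> nat \<Rightarrow> bool" where
  "K_union_K r s i j \<longleftrightarrow> i < r + s \<and> j < r + s \<and> i \<noteq> j \<and> (i < r \<longleftrightarrow> j < r)"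

definition K_union_E :: "nat \<Rightarrow> nat \<Rightarrow> nat \<Rightarrow> nat \<Rightarrow> bool" where
  "K_union_E r s i j \<longleftrightarrow> i < r \<and> j < r \<and> i \<noteq> j"

end

theory Submission
  imports Defs
begin

text \<open>A rank-one universal adjacency matrix is symmetric, hence of the form \<open>l v v\<^sup>T\<close>. Off the
  diagonal its entries are \<open>\<alpha>[x ~ y] + \<gamma>\<close>, so the products \<open>v\<^sub>x v\<^sub>y\<close> (\<open>x \<noteq> y\<close>) take one value on
  edges and another on non-edges. A vector with this property either takes at most two values or
  vanishes outside two coordinates, so adjacency depends only on the sides of a bipartition on which
  the two endpoints lie; up to complementation this leaves exactly two cliques, or one clique plus
  isolated vertices. Conversely \<open>2A + 2I - J = u u\<^sup>T\<close> with \<open>u = \<plusminus>1\<close> in the first case and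
  \<open>A + D / (r - 1) = u u\<^sup>T\<close> with \<open>u\<close> the indicator of the \<open>r\<close>-clique in the second. A graph and its
  complement have the same universal adjacency matrices, and rank 0 occurs exactly for empty and
  complete graphs; this is where \<open>n > 2\<close> enters, as \<open>K\<^sub>1 \<union> K\<^sub>1\<close> is edgeless.\<close>

lemma two_le_card_iff:
  fixes S :: "'a::finite set"
  shows "2 \<le> card S \<longleftrightarrow> (\<exists>x\<in>S. \<exists>y\<in>S. x \<noteq> y)"
proof -
  have "2 \<le> card S \<longleftrightarrow> \<not> card S \<le> Suc 0" by linarith
  then show ?thesis using card_le_Suc0_iff_eq[OF finite[of S]] by blast
qed

lemma card_less_CARD_iff: "card (S :: 'n::finite set) < CARD('n) \<longleftrightarrow> S \<noteq> UNIV"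
  using psubset_card_mono[of UNIV S] by auto

section \<open>Rank-one matrices\<close>

lemma rank_eq_1_imp_outer:
  fixes A :: "real^'n^'m"
  assumes "rank A = 1"
  obtains c u where "\<And>i j. A$i$j = c i * u$j"
proof -
  obtain B where B: "B \<subseteq> rows A" "independent B" "rows A \<subseteq> span B" "card B = dim (rows A)"
    using basis_exists[of "rows A"] by blast
  then obtain u where u: "B = {u}"
    using assms card_1_singletonE[of B] B(4) row_rank_def[of A] by metis
  have "\<exists>k. A$i = k *\<^sub>R u" for i
  proof -
    have "A$i \<in> rows A" by (auto simp: rows_def row_def)
    then have "A$i \<in> span {u}" using B(3) u by blast
    then show ?thesis by (auto simp: span_singleton)
  qed
  then obtain c where "\<And>i. A$i = c i *\<^sub>R u" by metis
  then show ?thesis using that by auto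
qed

lemma symmetric_rank_eq_1:
  fixes A :: "real^'n^'n"
  assumes "rank A = 1" and "transpose A = A"
  obtains l v where "l \<noteq> 0" and "\<And>i j. A$i$j = l * v$i * v$j"
proof -
  obtain c v where cv: "\<And>i j. A$i$j = c i * v$j"
    using rank_eq_1_imp_outer[OF assms(1)] by blast
  have "A \<noteq> 0" using assms(1) rank_eq_0 by fastforce
  then obtain i0 j0 where "A$i0$j0 \<noteq> 0" by (metis vec_eq_iff zero_index)
  then have "v$j0 \<noteq> 0" and "c i0 \<noteq> 0" using cv by auto
  define l where "l = c j0 / v$j0"
  have c: "c i = l * v$i" for i
  proof -
    have "A$i$j0 = A$j0$i"
      using arg_cong[OF assms(2), of "\<lambda>M. M$j0$i"] by (simp add: transpose_def)
    then show ?thesis using \<open>v$j0 \<noteq> 0\<close> by (simp add: cv l_def field_simps)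
  qed
  show ?thesis
  proof
    show "l \<noteq> 0" using \<open>c i0 \<noteq> 0\<close> c by auto
    show "A$i$j = l * v$i * v$j" for i j by (simp add: cv c)
  qed
qed

lemma rank_outer_self:
  fixes A :: "real^'n^'n"
  assumes "\<And>i j. A$i$j = u$i * u$j" and "u \<noteq> 0"
  shows "rank A = 1"
proof -
  have "rows A \<subseteq> span {u}"
  proof
    fix x assume "x \<in> rows A"
    then obtain i where "x = A$i" by (auto simp: rows_def row_def)
    then have "x = u$i *\<^sub>R u" using assms(1) by (simp add: vec_eq_iff)
    then show "x \<in> span {u}" by (simp add: span_mul span_base)
  qed
  then have "rank A \<le> 1"
    unfolding row_rank_def using dim_subset[of "rows A" "span {u}"] assms(2) by simp
  moreover obtain k where "u$k \<noteq> 0" using assms(2) by (metis vec_eq_iff zero_index)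
  then have "A$k$k \<noteq> 0" using assms(1) by simp
  then have "A \<noteq> 0" by auto
  then have "rank A \<noteq> 0" by (simp add: rank_eq_0)
  ultimately show ?thesis by simp
qed

section \<open>Universal adjacency matrices\<close>

lemma universal_adj_entry:
  "universal_adj E \<alpha> \<beta> \<gamma> \<delta> $ i $ j =
     (if E i j then \<alpha> else 0) + (if i = j then \<beta> + \<delta> * real (degree E i) else 0) + \<gamma>"
  by (simp add: universal_adj_def adj_matrix_def deg_matrix_def ones_matrix_def mat_def)

lemma transpose_universal_adj:
  assumes "simple_graph E"
  shows "transpose (universal_adj E \<alpha> \<beta> \<gamma> \<delta>) = universal_adj E \<alpha> \<beta> \<gamma> \<delta>"
  using assms unfolding simple_graph_def
  by (auto simp: vec_eq_iff transpose_def universal_adj_entry)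

lemma simple_graph_compl: "simple_graph E \<Longrightarrow> simple_graph (graph_compl E)"
  by (auto simp: graph_compl_def simple_graph_def)

lemma graph_compl_compl: "simple_graph E \<Longrightarrow> graph_compl (graph_compl E) = E"
  unfolding fun_eq_iff graph_compl_def simple_graph_def by blast

lemma degree_graph_compl:
  fixes E :: "'n::finite \<Rightarrow> 'n \<Rightarrow> bool"
  assumes "simple_graph E"
  shows "real (degree (graph_compl E) v) = real CARD('n) - 1 - real (degree E v)"
proof -
  have v: "v \<notin> {w. E v w}" using assms by (simp add: simple_graph_def)
  have "{w. graph_compl E v w} = UNIV - insert v {w. E v w}"
    by (auto simp: graph_compl_def)
  then have "card {w. graph_compl E v w} = CARD('n) - card (insert v {w. E v w})"
    by (simp add: card_Diff_subset)
  moreover have "card (insert v {w. E v w}) \<le> CARD('n)" by (rule card_mono) auto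
  ultimately show ?thesis using v by (simp add: degree_def of_nat_diff)
qed

lemma universal_adj_graph_compl:
  fixes E :: "'n::finite \<Rightarrow> 'n \<Rightarrow> bool"
  assumes "simple_graph E"
  shows "universal_adj (graph_compl E) \<alpha> \<beta> \<gamma> \<delta> =
    universal_adj E (- \<alpha>) (\<beta> - \<alpha> + \<delta> * (real CARD('n) - 1)) (\<alpha> + \<gamma>) (- \<delta>)"
  using assms unfolding simple_graph_def
  by (auto simp: vec_eq_iff universal_adj_entry degree_graph_compl[OF assms] graph_compl_def algebra_simps)

definition universal_ranks :: "('n::finite \<Rightarrow> 'n \<Rightarrow> bool) \<Rightarrow> nat set" where
  "universal_ranks E = {k. \<exists>\<alpha> \<beta> \<gamma> \<delta>. \<alpha> \<noteq> 0 \<and> rank (universal_adj E \<alpha> \<beta> \<gamma> \<delta>) = k}"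

lemma universal_ranksI:
  "\<alpha> \<noteq> 0 \<Longrightarrow> rank (universal_adj E \<alpha> \<beta> \<gamma> \<delta>) = k \<Longrightarrow> k \<in> universal_ranks E"
  unfolding universal_ranks_def by blast

lemma universal_ranks_graph_compl_subset:
  assumes "simple_graph E"
  shows "universal_ranks (graph_compl E) \<subseteq> universal_ranks E"
proof
  fix k assume "k \<in> universal_ranks (graph_compl E)"
  then obtain \<alpha> \<beta> \<gamma> \<delta> where "- \<alpha> \<noteq> 0" "rank (universal_adj (graph_compl E) \<alpha> \<beta> \<gamma> \<delta>) = k"
    unfolding universal_ranks_def by auto
  then show "k \<in> universal_ranks E"
    unfolding universal_ranks_def universal_adj_graph_compl[OF assms] by blast
qed

lemma universal_ranks_graph_compl:
  assumes "simple_graph E"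
  shows "universal_ranks (graph_compl E) = universal_ranks E"
  using universal_ranks_graph_compl_subset[OF assms]
    universal_ranks_graph_compl_subset[OF simple_graph_compl[OF assms]]
  by (simp add: graph_compl_compl[OF assms])

definition nontrivial_graph :: "('n \<Rightarrow> 'n \<Rightarrow> bool) \<Rightarrow> bool" where
  "nontrivial_graph E \<longleftrightarrow> (\<exists>x y. E x y) \<and> (\<exists>x y. x \<noteq> y \<and> \<not> E x y)"

lemma nontrivial_graph_compl:
  assumes "simple_graph E"
  shows "nontrivial_graph (graph_compl E) \<longleftrightarrow> nontrivial_graph E"
proof -
  have "x \<noteq> y" if "E x y" for x y using that assms unfolding simple_graph_def by blast
  then show ?thesis unfolding nontrivial_graph_def graph_compl_def by blast
qed

lemma zero_in_universal_ranks_iff: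
  assumes "simple_graph E"
  shows "0 \<in> universal_ranks E \<longleftrightarrow> \<not> nontrivial_graph E"
proof
  assume "0 \<in> universal_ranks E"
  then obtain \<alpha> \<beta> \<gamma> \<delta> where "\<alpha> \<noteq> 0" and M: "universal_adj E \<alpha> \<beta> \<gamma> \<delta> = 0"
    unfolding universal_ranks_def by (auto simp: rank_eq_0)
  have off_diag: "(if E i j then \<alpha> else 0) + \<gamma> = 0" if "i \<noteq> j" for i j
  proof -
    have "universal_adj E \<alpha> \<beta> \<gamma> \<delta> $ i $ j = 0" by (simp add: M)
    with that show ?thesis by (simp add: universal_adj_entry)
  qed
  show "\<not> nontrivial_graph E"
  proof
    assume "nontrivial_graph E"
    then obtain x y x' y' where "E x y" "x' \<noteq> y'" "\<not> E x' y'"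
      unfolding nontrivial_graph_def by blast
    moreover have "x \<noteq> y" using \<open>E x y\<close> assms unfolding simple_graph_def by blast
    ultimately have "\<alpha> + \<gamma> = 0" "\<gamma> = 0" using off_diag[of x y] off_diag[of x' y'] by auto
    with \<open>\<alpha> \<noteq> 0\<close> show False by simp
  qed
next
  assume "\<not> nontrivial_graph E"
  then have "(\<forall>x y. \<not> E x y) \<or> (\<forall>x y. E x y \<longleftrightarrow> x \<noteq> y)"
    using assms unfolding nontrivial_graph_def simple_graph_def by auto
  then have "universal_adj E 1 0 0 0 = 0 \<or> universal_adj E 1 1 (-1) 0 = 0"
    by (auto simp: vec_eq_iff universal_adj_entry)
  then show "0 \<in> universal_ranks E"
    using universal_ranksI[of 1 E 0 0 0 0] universal_ranksI[of 1 E 1 "-1" 0 0] by auto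
qed

lemma mur_eq_Least_universal_ranks: "mur E = (LEAST k. k \<in> universal_ranks E)"
  by (simp add: mur_def universal_ranks_def)

lemma mur_graph_compl: "simple_graph E \<Longrightarrow> mur (graph_compl E) = mur E"
  by (simp add: mur_eq_Least_universal_ranks universal_ranks_graph_compl)

lemma mur_eq_1_iff:
  assumes "simple_graph E"
  shows "mur E = 1 \<longleftrightarrow> nontrivial_graph E \<and> 1 \<in> universal_ranks E"
proof -
  note mur = mur_eq_Least_universal_ranks[of E]
  have "rank (universal_adj E 1 0 0 0) \<in> universal_ranks E"
    by (rule universal_ranksI) simp_all
  then have least: "mur E \<in> universal_ranks E" unfolding mur by (rule LeastI)
  have "mur E = 1 \<longleftrightarrow> 1 \<in> universal_ranks E \<and> 0 \<notin> universal_ranks E"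
  proof
    assume "mur E = 1"
    then show "1 \<in> universal_ranks E \<and> 0 \<notin> universal_ranks E"
      using least Least_le[of "\<lambda>k. k \<in> universal_ranks E" 0] by (auto simp: mur)
  next
    assume "1 \<in> universal_ranks E \<and> 0 \<notin> universal_ranks E"
    then show "mur E = 1"
      unfolding mur by (intro Least_equality) (auto simp: Suc_le_eq intro: gr0I)
  qed
  then show ?thesis using zero_in_universal_ranks_iff[OF assms] by blast
qed

lemma universal_adj_rank_one_products:
  fixes E :: "'n::finite \<Rightarrow> 'n \<Rightarrow> bool"
  assumes "simple_graph E" and "1 \<in> universal_ranks E"
  shows "\<exists>q0 q1 (u :: 'n \<Rightarrow> real). q0 \<noteq> q1 \<and>
    (\<forall>x y. x \<noteq> y \<longrightarrow> u x * u y = (if E x y then q1 else q0))"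
proof -
  obtain \<alpha> \<beta> \<gamma> \<delta> where "\<alpha> \<noteq> 0" and rank: "rank (universal_adj E \<alpha> \<beta> \<gamma> \<delta>) = 1"
    using assms(2) unfolding universal_ranks_def by blast
  obtain l v where "l \<noteq> 0" and lv: "\<And>i j. universal_adj E \<alpha> \<beta> \<gamma> \<delta> $ i $ j = l * v$i * v$j"
    using symmetric_rank_eq_1[OF rank transpose_universal_adj[OF assms(1)]] by blast
  have "v$x * v$y = (if E x y then (\<alpha> + \<gamma>) / l else \<gamma> / l)" if "x \<noteq> y" for x y
  proof -
    have "(if E x y then \<alpha> else 0) + \<gamma> = l * v$x * v$y"
      using that lv[of x y] by (simp add: universal_adj_entry)
    then show ?thesis using \<open>l \<noteq> 0\<close> by (auto simp: field_simps split: if_splits)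
  qed
  moreover have "\<gamma> / l \<noteq> (\<alpha> + \<gamma>) / l" using \<open>\<alpha> \<noteq> 0\<close> \<open>l \<noteq> 0\<close> by (simp add: divide_cancel_right)
  ultimately show ?thesis by blast
qed

section \<open>Graphs whose adjacency depends on a bipartition\<close>

definition side_determined :: "('n \<Rightarrow> 'n \<Rightarrow> 'a) \<Rightarrow> 'n set \<Rightarrow> (bool \<Rightarrow> bool \<Rightarrow> 'a) \<Rightarrow> bool" where
  "side_determined R S F \<longleftrightarrow> (\<forall>x y. x \<noteq> y \<longrightarrow> R x y = F (x \<in> S) (y \<in> S))"

lemma no_three_nonzero_values_of_two_valued_products:
  fixes u :: "'n \<Rightarrow> real"
  assumes P: "\<forall>x y. x \<noteq> y \<longrightarrow> u x * u y \<in> {q0, q1}"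
    and "u a \<noteq> 0" "u b \<noteq> 0" "u c \<noteq> 0" "u a \<noteq> u b" "u a \<noteq> u c" "u b \<noteq> u c"
  shows False
proof -
  have "u a * u b \<noteq> u a * u c" "u a * u b \<noteq> u b * u c" "u a * u c \<noteq> u b * u c"
    using assms(2-7) by simp_all
  moreover have "a \<noteq> b" "a \<noteq> c" "b \<noteq> c" using assms(5-7) by auto
  then have "u a * u b \<in> {q0, q1}" "u a * u c \<in> {q0, q1}" "u b * u c \<in> {q0, q1}" using P by auto
  ultimately show False by auto
qed

lemma two_valued_products_zero_outside_pair:
  fixes u :: "'n \<Rightarrow> real"
  assumes P: "\<forall>x y. x \<noteq> y \<longrightarrow> u x * u y \<in> {q0, q1}"
    and "u z = 0" "u a \<noteq> 0" "u b \<noteq> 0" "u a \<noteq> u b" "c \<noteq> a" "c \<noteq> b"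
  shows "u c = 0"
proof (rule ccontr)
  assume "u c \<noteq> 0"
  have "z \<noteq> a" "a \<noteq> b" "z \<noteq> c" using assms(2-5) \<open>u c \<noteq> 0\<close> by auto
  then have "u z * u a \<in> {q0, q1}" "u a * u b \<in> {q0, q1}" using P by auto
  moreover have "u a * u b \<noteq> 0" "u z * u a = 0" using assms(2-4) by simp_all
  moreover obtain p where "p \<in> {q0, q1}" "p \<noteq> 0" "p \<noteq> u a * u b"
  proof (cases "u c = u b")
    case True
    then show ?thesis using that[of "u b * u c"] P[rule_format, of b c] assms(3-7) \<open>u c \<noteq> 0\<close> by auto
  next
    case False
    then show ?thesis using that[of "u a * u c"] P[rule_format, of a c] assms(3-7) \<open>u c \<noteq> 0\<close> by auto
  qed
  ultimately show False by auto
qed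

lemma two_valued_products_side_determined:
  fixes u :: "'n \<Rightarrow> real"
  assumes P: "\<forall>x y. x \<noteq> y \<longrightarrow> u x * u y \<in> {q0, q1}"
  shows "\<exists>S F. side_determined (\<lambda>x y. u x * u y) S F"
proof (cases "\<exists>z a b. u z = 0 \<and> u a \<noteq> 0 \<and> u b \<noteq> 0 \<and> u a \<noteq> u b")
  case True
  then obtain z a b where zab: "u z = 0" "u a \<noteq> 0" "u b \<noteq> 0" "u a \<noteq> u b" by blast
  have "side_determined (\<lambda>x y. u x * u y) {a, b} (\<lambda>p q. if p \<and> q then u a * u b else 0)"
    using two_valued_products_zero_outside_pair[OF P zab] unfolding side_determined_def by auto
  then show ?thesis by blast
next
  case False
  have "\<exists>t t'. \<forall>x. u x = t \<or> u x = t'"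
  proof (rule ccontr)
    assume "\<not> ?thesis"
    then obtain a b c where "u a \<noteq> u b" "u a \<noteq> u c" "u b \<noteq> u c" by metis
    with False no_three_nonzero_values_of_two_valued_products[OF P] show False by metis
  qed
  then obtain t t' where "\<And>x. u x \<noteq> t \<Longrightarrow> u x = t'" by blast
  then have "side_determined (\<lambda>x y. u x * u y) {x. u x = t}
      (\<lambda>p q. (if p then t else t') * (if q then t else t'))"
    unfolding side_determined_def by auto
  then show ?thesis by blast
qed

definition two_cliques :: "('n::finite \<Rightarrow> 'n \<Rightarrow> bool) \<Rightarrow> bool" where
  "two_cliques E \<longleftrightarrow> (\<exists>S. S \<noteq> {} \<and> S \<noteq> UNIV \<and> (\<forall>x y. E x y \<longleftrightarrow> x \<noteq> y \<and> (x \<in> S \<longleftrightarrow> y \<in> S)))"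

definition clique_and_isolated :: "('n::finite \<Rightarrow> 'n \<Rightarrow> bool) \<Rightarrow> bool" where
  "clique_and_isolated E \<longleftrightarrow> (\<exists>S. 2 \<le> card S \<and> S \<noteq> UNIV \<and> (\<forall>x y. E x y \<longleftrightarrow> x \<noteq> y \<and> x \<in> S \<and> y \<in> S))"

lemma side_determined_graph_compl:
  "side_determined E S F \<Longrightarrow> side_determined (graph_compl E) S (\<lambda>p q. \<not> F p q)"
  unfolding side_determined_def graph_compl_def by blast

lemma side_determined_two_cliques_or_clique_and_isolated:
  fixes E :: "'n::finite \<Rightarrow> 'n \<Rightarrow> bool"
  assumes "simple_graph E" "nontrivial_graph E" "side_determined E S F" and "\<not> F True False"
  shows "two_cliques E \<or> clique_and_isolated E"
proof -
  have E: "E x y \<longleftrightarrow> x \<noteq> y \<and> F (x \<in> S) (y \<in> S)" for x y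
    using assms(1,3) unfolding simple_graph_def side_determined_def by (cases "x = y") auto
  obtain e1 e2 n1 n2 where "E e1 e2" "n1 \<noteq> n2" "\<not> E n1 n2"
    using assms(2) unfolding nontrivial_graph_def by blast
  have "\<exists>a b. a \<in> S \<and> b \<notin> S"
  proof (rule ccontr)
    assume "\<not> ?thesis"
    then have "e2 \<in> S \<longleftrightarrow> e1 \<in> S" "n1 \<in> S \<longleftrightarrow> e1 \<in> S" "n2 \<in> S \<longleftrightarrow> e1 \<in> S" by blast+
    then show False using E[of e1 e2] E[of n1 n2] \<open>E e1 e2\<close> \<open>n1 \<noteq> n2\<close> \<open>\<not> E n1 n2\<close>
      by (cases "e1 \<in> S") auto
  qed
  then obtain a b where "a \<in> S" "b \<notin> S" by blast
  moreover have "E b a \<longleftrightarrow> E a b" using assms(1) unfolding simple_graph_def by blast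
  ultimately have "\<not> F False True" using E[of a b] E[of b a] assms(4) by auto
  then have E': "E x y \<longleftrightarrow> x \<noteq> y \<and> (x \<in> S \<and> y \<in> S \<and> F True True \<or> x \<notin> S \<and> y \<notin> S \<and> F False False)"
    for x y using E[of x y] assms(4) by (cases "x \<in> S"; cases "y \<in> S") auto
  consider "F True True" "F False False" | "F True True" "\<not> F False False"
    | "\<not> F True True" "F False False" | "\<not> F True True" "\<not> F False False" by blast
  then show ?thesis
  proof cases
    case 1
    then have "two_cliques E"
      unfolding two_cliques_def using \<open>a \<in> S\<close> \<open>b \<notin> S\<close> by (intro exI[of _ S]) (auto simp: E')
    then show ?thesis ..
  next
    case 2
    then have "e1 \<in> S" "e2 \<in> S" "e1 \<noteq> e2" using E'[of e1 e2] \<open>E e1 e2\<close> by auto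
    then have "clique_and_isolated E"
      unfolding clique_and_isolated_def two_le_card_iff using 2 \<open>b \<notin> S\<close>
      by (intro exI[of _ S]) (auto simp: E')
    then show ?thesis ..
  next
    case 3
    then have "e1 \<notin> S" "e2 \<notin> S" "e1 \<noteq> e2" using E'[of e1 e2] \<open>E e1 e2\<close> by auto
    then have "clique_and_isolated E"
      unfolding clique_and_isolated_def two_le_card_iff using 3 \<open>a \<in> S\<close>
      by (intro exI[of _ "- S"]) (auto simp: E')
    then show ?thesis ..
  next
    case 4
    then show ?thesis using E'[of e1 e2] \<open>E e1 e2\<close> by simp
  qed
qed

lemma rank_one_imp_two_cliques_or_clique_and_isolated:
  fixes E :: "'n::finite \<Rightarrow> 'n \<Rightarrow> bool"
  assumes "simple_graph E" "nontrivial_graph E" "1 \<in> universal_ranks E"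
  shows "two_cliques E \<or> clique_and_isolated E \<or>
    two_cliques (graph_compl E) \<or> clique_and_isolated (graph_compl E)"
proof -
  obtain q0 q1 and u :: "'n \<Rightarrow> real"
    where "q0 \<noteq> q1" and u: "\<forall>x y. x \<noteq> y \<longrightarrow> u x * u y = (if E x y then q1 else q0)"
    using universal_adj_rank_one_products[OF assms(1,3)] by blast
  then have "\<forall>x y. x \<noteq> y \<longrightarrow> u x * u y \<in> {q0, q1}" by simp
  then obtain S F where "side_determined (\<lambda>x y. u x * u y) S F"
    using two_valued_products_side_determined by blast
  then have E: "side_determined E S (\<lambda>p q. F p q = q1)"
    using u \<open>q0 \<noteq> q1\<close> unfolding side_determined_def by (smt (verit))
  show ?thesis
  proof (cases "F True False = q1")
    case True
    have "nontrivial_graph (graph_compl E)" using nontrivial_graph_compl assms(1,2) by blast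
    with True have "two_cliques (graph_compl E) \<or> clique_and_isolated (graph_compl E)"
      using side_determined_two_cliques_or_clique_and_isolated[OF simple_graph_compl[OF assms(1)]
          _ side_determined_graph_compl[OF E]] by simp
    then show ?thesis by blast
  next
    case False
    then show ?thesis
      using side_determined_two_cliques_or_clique_and_isolated[OF assms(1,2) E] by blast
  qed
qed

lemma two_cliques_rank_one:
  fixes E :: "'n::finite \<Rightarrow> 'n \<Rightarrow> bool"
  assumes "two_cliques E"
  shows "1 \<in> universal_ranks E"
proof -
  obtain S where E: "\<And>x y. E x y \<longleftrightarrow> x \<noteq> y \<and> (x \<in> S \<longleftrightarrow> y \<in> S)"
    using assms unfolding two_cliques_def by blast
  define u :: "real^'n" where "u = (\<chi> i. if i \<in> S then 1 else -1)"
  have "universal_adj E 2 2 (-1) 0 $ i $ j = u$i * u$j" for i j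
    by (auto simp: universal_adj_entry u_def E)
  moreover have "u \<noteq> 0" by (auto simp: u_def vec_eq_iff)
  ultimately have "rank (universal_adj E 2 2 (-1) 0) = 1" by (rule rank_outer_self)
  then show ?thesis using universal_ranksI[of 2 E 2 "-1" 0 1] by simp
qed

lemma clique_and_isolated_rank_one:
  fixes E :: "'n::finite \<Rightarrow> 'n \<Rightarrow> bool"
  assumes "clique_and_isolated E"
  shows "1 \<in> universal_ranks E"
proof -
  obtain S where "2 \<le> card S" and E: "\<And>x y. E x y \<longleftrightarrow> x \<noteq> y \<and> x \<in> S \<and> y \<in> S"
    using assms unfolding clique_and_isolated_def by blast
  have "{w. E x w} = (if x \<in> S then S - {x} else {})" for x by (auto simp: E)
  then have deg: "real (degree E x) = (if x \<in> S then real (card S) - 1 else 0)" for x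
    using \<open>2 \<le> card S\<close> by (simp add: degree_def of_nat_diff)
  define \<delta> where "\<delta> = 1 / (real (card S) - 1)"
  have \<delta>: "\<delta> * (real (card S) - 1) = 1" using \<open>2 \<le> card S\<close> by (simp add: \<delta>_def)
  define u :: "real^'n" where "u = (\<chi> i. if i \<in> S then 1 else 0)"
  have "universal_adj E 1 0 0 \<delta> $ i $ j = u$i * u$j" for i j
    by (auto simp: universal_adj_entry u_def E deg \<delta>)
  moreover obtain x where "x \<in> S" using \<open>2 \<le> card S\<close> unfolding two_le_card_iff by blast
  then have "u \<noteq> 0" by (auto simp: u_def vec_eq_iff)
  ultimately have "rank (universal_adj E 1 0 0 \<delta>) = 1" by (rule rank_outer_self)
  then show ?thesis using universal_ranksI[of 1 E 0 0 \<delta> 1] by simp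
qed

lemma two_cliques_nontrivial:
  fixes E :: "'n::finite \<Rightarrow> 'n \<Rightarrow> bool"
  assumes "two_cliques E" and "CARD('n) > 2"
  shows "nontrivial_graph E"
proof -
  obtain S where "S \<noteq> {}" "S \<noteq> UNIV" and E: "\<And>x y. E x y \<longleftrightarrow> x \<noteq> y \<and> (x \<in> S \<longleftrightarrow> y \<in> S)"
    using assms(1) unfolding two_cliques_def by blast
  then obtain a b where "a \<in> S" "b \<notin> S" by blast
  then have non_edge: "a \<noteq> b \<and> \<not> E a b" by (auto simp: E)
  have "card S + card (- S) = CARD('n)"
    using card_Un_disjoint[of S "- S"] by (simp add: Compl_partition)
  then have "2 \<le> card S \<or> 2 \<le> card (- S)" using assms(2) by linarith
  then obtain x y where "x \<noteq> y" "x \<in> S \<longleftrightarrow> y \<in> S"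
    unfolding two_le_card_iff by auto
  then have "E x y" by (simp add: E)
  with non_edge show ?thesis unfolding nontrivial_graph_def by blast
qed

lemma clique_and_isolated_nontrivial:
  assumes "clique_and_isolated E"
  shows "nontrivial_graph E"
proof -
  obtain S where "2 \<le> card S" "S \<noteq> UNIV" and E: "\<And>x y. E x y \<longleftrightarrow> x \<noteq> y \<and> x \<in> S \<and> y \<in> S"
    using assms unfolding clique_and_isolated_def by blast
  then obtain x y b where "x \<in> S" "y \<in> S" "x \<noteq> y" "b \<notin> S"
    unfolding two_le_card_iff by blast
  then have "E x y" "b \<noteq> x" "\<not> E b x" by (auto simp: E)
  then show ?thesis unfolding nontrivial_graph_def by blast
qed

section \<open>Isomorphism with the model graphs\<close>

lemma ex_bij_initial_segment:
  fixes S :: "'n::finite set"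
  obtains f where "bij_betw f (UNIV :: 'n set) {0..<CARD('n)}" and "\<And>x. x \<in> S \<longleftrightarrow> f x < card S"
proof -
  let ?k = "card S" and ?m = "card (- S)"
  obtain g where g: "bij_betw g S {0..<?k}" using ex_bij_betw_finite_nat[OF finite[of S]] by blast
  obtain h where h: "bij_betw h (- S) {0..<?m}" using ex_bij_betw_finite_nat[OF finite[of "- S"]] by blast
  have "bij_betw ((+) ?k) {0..<?m} {?k..<?k + ?m}" by (simp add: add.commute)
  from bij_betw_trans[OF h this] have h': "bij_betw (\<lambda>x. ?k + h x) (- S) {?k..<?k + ?m}"
    by (simp add: comp_def)
  have "?k + ?m = CARD('n)" using card_Un_disjoint[of S "- S"] by (simp add: Compl_partition)
  then have "{0..<?k} \<union> {?k..<?k + ?m} = {0..<CARD('n)}" by auto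
  moreover have "bij_betw (\<lambda>x. if x \<in> S then g x else ?k + h x) (S \<union> - S) ({0..<?k} \<union> {?k..<?k + ?m})"
    by (rule bij_betw_disjoint_Un[OF g h']) auto
  ultimately have "bij_betw (\<lambda>x. if x \<in> S then g x else ?k + h x) UNIV {0..<CARD('n)}" by simp
  moreover have "x \<in> S \<longleftrightarrow> (if x \<in> S then g x else ?k + h x) < ?k" for x
    using g unfolding bij_betw_def by auto
  ultimately show ?thesis using that by blast
qed

lemma card_bij_initial_preimage:
  fixes f :: "'n::finite \<Rightarrow> nat"
  assumes "bij_betw f UNIV {0..<n}" and "r \<le> n"
  shows "card {x. f x < r} = r"
proof -
  have "{x. f x < r} = f -` {0..<r}" by auto
  moreover have "{0..<r} \<subseteq> range f" using assms by (auto simp: bij_betw_def)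
  ultimately show ?thesis using card_vimage_inj[of f "{0..<r}"] assms(1) by (simp add: bij_betw_def)
qed

lemma iso_to_iff_side_relation:
  fixes E :: "'n::finite \<Rightarrow> 'n \<Rightarrow> bool"
  assumes "r \<le> CARD('n)"
    and H: "\<And>i j. i < CARD('n) \<Longrightarrow> j < CARD('n) \<Longrightarrow> H i j \<longleftrightarrow> i \<noteq> j \<and> g (i < r) (j < r)"
  shows "iso_to E H CARD('n) \<longleftrightarrow> (\<exists>S. card S = r \<and> (\<forall>x y. E x y \<longleftrightarrow> x \<noteq> y \<and> g (x \<in> S) (y \<in> S)))"
proof
  assume "iso_to E H CARD('n)"
  then obtain f where f: "bij_betw f UNIV {0..<CARD('n)}" and E: "\<And>x y. E x y \<longleftrightarrow> H (f x) (f y)"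
    unfolding iso_to_def by blast
  have "f x < CARD('n)" for x using f by (auto simp: bij_betw_def)
  moreover have "f x = f y \<longleftrightarrow> x = y" for x y using f by (auto simp: bij_betw_def inj_eq)
  ultimately have "E x y \<longleftrightarrow> x \<noteq> y \<and> g (x \<in> {x. f x < r}) (y \<in> {x. f x < r})" for x y
    by (simp add: E H)
  then show "\<exists>S. card S = r \<and> (\<forall>x y. E x y \<longleftrightarrow> x \<noteq> y \<and> g (x \<in> S) (y \<in> S))"
    using card_bij_initial_preimage[OF f assms(1)] by blast
next
  assume "\<exists>S. card S = r \<and> (\<forall>x y. E x y \<longleftrightarrow> x \<noteq> y \<and> g (x \<in> S) (y \<in> S))"
  then obtain S where "card S = r" and E: "\<And>x y. E x y \<longleftrightarrow> x \<noteq> y \<and> g (x \<in> S) (y \<in> S)" by blast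
  obtain f where f: "bij_betw f (UNIV :: 'n set) {0..<CARD('n)}" and S: "\<And>x. x \<in> S \<longleftrightarrow> f x < card S"
    using ex_bij_initial_segment by blast
  have "f x < CARD('n)" for x using f by (auto simp: bij_betw_def)
  moreover have "f x = f y \<longleftrightarrow> x = y" for x y using f by (auto simp: bij_betw_def inj_eq)
  ultimately have "E x y \<longleftrightarrow> H (f x) (f y)" for x y
    using S[of x] S[of y] \<open>card S = r\<close> by (simp add: E H)
  with f show "iso_to E H CARD('n)" unfolding iso_to_def by blast
qed

lemma iso_to_K_union_K_iff_two_cliques:
  fixes E :: "'n::finite \<Rightarrow> 'n \<Rightarrow> bool"
  shows "(\<exists>r s. r > 0 \<and> s > 0 \<and> r + s = CARD('n) \<and> iso_to E (K_union_K r s) (r + s)) \<longleftrightarrow>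
    two_cliques E"
proof -
  let ?rel = "\<lambda>S. \<forall>x y. E x y \<longleftrightarrow> x \<noteq> y \<and> (x \<in> S \<longleftrightarrow> y \<in> S)"
  have iso: "iso_to E (K_union_K r (CARD('n) - r)) CARD('n) \<longleftrightarrow> (\<exists>S. card S = r \<and> ?rel S)"
    if "r < CARD('n)" for r
    using that by (intro iso_to_iff_side_relation) (auto simp: K_union_K_def)
  have "(\<exists>r s. r > 0 \<and> s > 0 \<and> r + s = CARD('n) \<and> iso_to E (K_union_K r s) (r + s)) \<longleftrightarrow>
      (\<exists>r. 0 < r \<and> r < CARD('n) \<and> iso_to E (K_union_K r (CARD('n) - r)) CARD('n))"
    (is "?L \<longleftrightarrow> ?R")
  proof
    assume ?L
    then obtain r s where "r > 0" "s > 0" "r + s = CARD('n)" "iso_to E (K_union_K r s) (r + s)" by blast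
    moreover from this have "s = CARD('n) - r" by simp
    ultimately show ?R by auto
  next
    assume ?R
    then obtain r where "0 < r" "r < CARD('n)" "iso_to E (K_union_K r (CARD('n) - r)) CARD('n)" by blast
    then show ?L by (intro exI[of _ r] exI[of _ "CARD('n) - r"]) simp
  qed
  also have "\<dots> \<longleftrightarrow> (\<exists>r. 0 < r \<and> r < CARD('n) \<and> (\<exists>S. card S = r \<and> ?rel S))"
    by (intro ex_cong1 conj_cong refl iso)
  also have "\<dots> \<longleftrightarrow> (\<exists>S. 0 < card S \<and> card S < CARD('n) \<and> ?rel S)"
    by auto
  finally show ?thesis
    unfolding two_cliques_def card_less_CARD_iff by (simp add: card_gt_0_iff)
qed

lemma iso_to_K_union_E_iff_clique_and_isolated:
  fixes E :: "'n::finite \<Rightarrow> 'n \<Rightarrow> bool"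
  shows "(\<exists>r s. r + s = CARD('n) \<and> 1 < r \<and> r < CARD('n) \<and> iso_to E (K_union_E r s) (r + s)) \<longleftrightarrow>
    clique_and_isolated E"
proof -
  let ?rel = "\<lambda>S. \<forall>x y. E x y \<longleftrightarrow> x \<noteq> y \<and> x \<in> S \<and> y \<in> S"
  have iso: "iso_to E (K_union_E r (CARD('n) - r)) CARD('n) \<longleftrightarrow> (\<exists>S. card S = r \<and> ?rel S)"
    if "r < CARD('n)" for r
    using that by (intro iso_to_iff_side_relation) (auto simp: K_union_E_def)
  have "(\<exists>r s. r + s = CARD('n) \<and> 1 < r \<and> r < CARD('n) \<and> iso_to E (K_union_E r s) (r + s)) \<longleftrightarrow>
      (\<exists>r. 1 < r \<and> r < CARD('n) \<and> iso_to E (K_union_E r (CARD('n) - r)) CARD('n))"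
    (is "?L \<longleftrightarrow> ?R")
  proof
    assume ?L
    then obtain r s where "r + s = CARD('n)" "1 < r" "r < CARD('n)" "iso_to E (K_union_E r s) (r + s)" by blast
    moreover from this have "s = CARD('n) - r" by simp
    ultimately show ?R by auto
  next
    assume ?R
    then obtain r where "1 < r" "r < CARD('n)" "iso_to E (K_union_E r (CARD('n) - r)) CARD('n)" by blast
    then show ?L by (intro exI[of _ r] exI[of _ "CARD('n) - r"]) simp
  qed
  also have "\<dots> \<longleftrightarrow> (\<exists>r. 1 < r \<and> r < CARD('n) \<and> (\<exists>S. card S = r \<and> ?rel S))"
    by (intro ex_cong1 conj_cong refl iso)
  also have "\<dots> \<longleftrightarrow> (\<exists>S. 1 < card S \<and> card S < CARD('n) \<and> ?rel S)"
    by auto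
  finally show ?thesis
    unfolding clique_and_isolated_def card_less_CARD_iff by (simp add: numeral_2_eq_2 Suc_le_eq)
qed

lemma mur_eq_1_if_two_cliques_or_clique_and_isolated:
  fixes E :: "'n::finite \<Rightarrow> 'n \<Rightarrow> bool"
  assumes "simple_graph E" and "CARD('n) > 2" and "two_cliques E \<or> clique_and_isolated E"
  shows "mur E = 1"
proof -
  have "nontrivial_graph E \<and> 1 \<in> universal_ranks E"
    using assms(3) two_cliques_nontrivial[OF _ assms(2)] two_cliques_rank_one
      clique_and_isolated_nontrivial clique_and_isolated_rank_one by blast
  then show ?thesis using mur_eq_1_iff[OF assms(1)] by blast
qed

theorem theorem26:
  fixes E :: "'n::finite \<Rightarrow> 'n \<Rightarrow> bool"
  assumes "simple_graph E" and "CARD('n) > 2"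
  shows "mur E = 1 \<longleftrightarrow>
    (\<exists>G \<in> {E, graph_compl E}.
       (\<exists>r s. r > 0 \<and> s > 0 \<and> r + s = CARD('n) \<and> iso_to G (K_union_K r s) (r + s)) \<or>
       (\<exists>r s. r + s = CARD('n) \<and> 1 < r \<and> r < CARD('n) \<and> iso_to G (K_union_E r s) (r + s)))"
proof -
  have "mur E = 1 \<longleftrightarrow> two_cliques E \<or> clique_and_isolated E \<or>
      two_cliques (graph_compl E) \<or> clique_and_isolated (graph_compl E)"
  proof
    assume "mur E = 1"
    then show "two_cliques E \<or> clique_and_isolated E \<or>
        two_cliques (graph_compl E) \<or> clique_and_isolated (graph_compl E)"
      using mur_eq_1_iff[OF assms(1)] rank_one_imp_two_cliques_or_clique_and_isolated[OF assms(1)]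
      by blast
  next
    assume "two_cliques E \<or> clique_and_isolated E \<or>
        two_cliques (graph_compl E) \<or> clique_and_isolated (graph_compl E)"
    then show "mur E = 1"
      using mur_eq_1_if_two_cliques_or_clique_and_isolated[OF assms(1,2)]
        mur_eq_1_if_two_cliques_or_clique_and_isolated[OF simple_graph_compl[OF assms(1)] assms(2)]
        mur_graph_compl[OF assms(1)]
      by auto
  qed
  then show ?thesis
    unfolding iso_to_K_union_K_iff_two_cliques iso_to_K_union_E_iff_clique_and_isolated by auto
qed

end
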